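(* Let $\mathcal{K}^{\langle 0\rangle}\subset\mathbb{R}^2$ be a simple nested fractal generated by the similitudes $\Psi_1,\dots,\Psi_N$, and let $V_0^{\langle 0\rangle}$ be its set of essential fixed points, $k=\# V_0^{\langle 0\rangle}$. (1) If $k\ge 3$, then the points of $V_0^{\langle 0\rangle}$ are the vertices of a regular polygon. (2) If $k=2$, then $\mathcal{K}^{\langle 0\rangle}$ is the line segment connecting the two points of $V_0^{\langle 0\rangle}$.
   Context: Let $L>1$, $N\ge 2$, let $U$ be an isometry of $\mathbb{R}^2$ and let $\nu_1=0,\nu_2,\dots,\nu_N\in\mathbb{R}^2$. Set $\Psi_i(x)=\frac1L U(x)+\nu_i$, $i=1,\dots,N$, and let $\mathcal{K}^{\langle 0\rangle}$ be the unique nonempty compact set with $\mathcal{K}^{\langle 0\rangle}=\bigcup_{i=1}^N\Psi_i(\mathcal{K}^{\langle 0\rangle})$. Each $\Psi_i$ has exactly one fixed point. A fixed point $x$ is called essential if there exist another fixed point $y$ and two different similitudes $\Psi_i,\Psi_j$ with $\Psi_i(x)=\Psi_j(y)$; $V_0^{\langle 0\rangle}$ denotes the set of essential fixed points. $\mathcal{K}^{\langle 0\rangle}$ is a simple nested fractal if: (1) $\#V_0^{\langle 0\rangle}\ge 2$; (2) (open set condition) there is an open $O\subset\mathbb{R}^2$ with $\Psi_i(O)\cap\Psi_j(O)=\emptyset$ for $i\ne j$ and $\bigcup_i\Psi_i(O)\subseteq O$; (3) (nesting) $\Psi_i(\mathcal{K}^{\langle 0\rangle})\cap\Psi_j(\mathcal{K}^{\langle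 0\rangle})=\Psi_i(V_0^{\langle 0\rangle})\cap\Psi_j(V_0^{\langle 0\rangle})$ for $i\neq j$; (4) (symmetry) for $x,y\in V_0^{\langle 0\rangle}$ let $S_{x,y}$ be the reflection in the perpendicular bisector of $[x,y]$; then for every $i$ and all $x,y\in V_0^{\langle 0\rangle}$ there is $j$ with $S_{x,y}(\Psi_i(V_0^{\langle 0\rangle}))=\Psi_j(V_0^{\langle 0\rangle})$; (5) (connectivity) the graph on $V_{-1}^{\langle 0\rangle}=\bigcup_i\Psi_i(V_0^{\langle 0\rangle})$ in which $x\sim y$ iff $x,y\in\Psi_i(\mathcal{K}^{\langle 0\rangle})$ for some $i$, is connected. *)

theory Defs
  imports "HOL-Analysis.Analysis"
begin

type_synonym pt = "real^2"

definition Psi :: "real \<Rightarrow> (pt \<Rightarrow> pt) \<Rightarrow> (nat \<Rightarrow> pt) \<Rightarrow> nat \<Rightarrow> pt \<Rightarrow> pt" where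
  "Psi L U \<nu> i x = (1 / L) *\<^sub>R U x + \<nu> i"

definition fixed_points :: "real \<Rightarrow> (pt \<Rightarrow> pt) \<Rightarrow> (nat \<Rightarrow> pt) \<Rightarrow> nat \<Rightarrow> pt set" where
  "fixed_points L U \<nu> N = {x. \<exists>i\<in>{1..N}. Psi L U \<nu> i x = x}"

definition essential_fixed_points :: "real \<Rightarrow> (pt \<Rightarrow> pt) \<Rightarrow> (nat \<Rightarrow> pt) \<Rightarrow> nat \<Rightarrow> pt set" where
  "essential_fixed_points L U \<nu> N =
     {x \<in> fixed_points L U \<nu> N. \<exists>y \<in> fixed_points L U \<nu> N. y \<noteq> x \<and>
        (\<exists>i\<in>{1..N}. \<exists>j\<in>{1..N}. i \<noteq> j \<and> Psi L U \<nu> i x = Psi L U \<nu> j y)}"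

definition bisector_reflection :: "pt \<Rightarrow> pt \<Rightarrow> pt \<Rightarrow> pt" where
  "bisector_reflection x y z =
     z - (2 * (((z - (1/2) *\<^sub>R (x + y)) \<bullet> (y - x)) / ((y - x) \<bullet> (y - x)))) *\<^sub>R (y - x)"

definition simple_nested_fractal ::
    "real \<Rightarrow> (pt \<Rightarrow> pt) \<Rightarrow> (nat \<Rightarrow> pt) \<Rightarrow> nat \<Rightarrow> pt set \<Rightarrow> bool" where
  "simple_nested_fractal L U \<nu> N K \<longleftrightarrow>
     (let V0 = essential_fixed_points L U \<nu> N;
          V1 = (\<Union>i\<in>{1..N}. Psi L U \<nu> i ` V0);
          E = {(a, b). a \<in> V1 \<and> b \<in> V1 \<and>
                 (\<exists>i\<in>{1..N}. a \<in> Psi L U \<nu> i ` K \<and> b \<in> Psi L U \<nu> i ` K)}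
      in card V0 \<ge> 2
       \<and> (\<exists>Op. open Op \<and> Op \<noteq> {} \<and>
             (\<forall>i\<in>{1..N}. \<forall>j\<in>{1..N}. i \<noteq> j \<longrightarrow> Psi L U \<nu> i ` Op \<inter> Psi L U \<nu> j ` Op = {}) \<and>
             (\<Union>i\<in>{1..N}. Psi L U \<nu> i ` Op) \<subseteq> Op)
       \<and> (\<forall>i\<in>{1..N}. \<forall>j\<in>{1..N}. i \<noteq> j \<longrightarrow>
             Psi L U \<nu> i ` K \<inter> Psi L U \<nu> j ` K = Psi L U \<nu> i ` V0 \<inter> Psi L U \<nu> j ` V0)
       \<and> (\<forall>i\<in>{1..N}. \<forall>x\<in>V0. \<forall>y\<in>V0. x \<noteq> y \<longrightarrow>
             (\<exists>j\<in>{1..N}. bisector_reflection x y ` (Psi L U \<nu> i ` V0) = Psi L U \<nu> j ` V0))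
       \<and> (\<forall>a\<in>V1. \<forall>b\<in>V1. (a, b) \<in> E\<^sup>*))"

definition regular_polygon_vertices :: "pt set \<Rightarrow> bool" where
  "regular_polygon_vertices V \<longleftrightarrow>
     (\<exists>c r \<theta>. r > 0 \<and>
        V = {c + r *\<^sub>R vector [cos (\<theta> + 2 * pi * real k / real (card V)),
                               sin (\<theta> + 2 * pi * real k / real (card V))] | k. k < card V})"

end

theory Submission
  imports Defs
begin

(*
  (1) For essential fixed points x, y the reflection S in the perpendicular bisector of [x, y]
  permutes V_1 by the symmetry axiom, hence fixes the centroid of V_1; so V_0 lies on a circle.
  Moreover Psi_j^-1 o S o Psi_i maps V_0 onto itself, and it is the reflection through the
  centroid c of V_0 along Q^-1 (y - x), Q being the linear part of U. Fixing x and varying y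
  gives k - 1 reflection symmetries of V_0 with pairwise different axes, because a line meets a
  circle in at most two points. In complex coordinates centred at c the products of two of them
  are rotations preserving V_0, so V_0 is invariant under a group of rotations of order at least
  k - 1 > k / 2. Such a group acts with a single orbit: it is the group of k-th roots of unity
  and V_0 is a regular k-gon.

  (2) If V_0 = {a, b}, all cells Psi_i(V_0) are translates of one segment of direction Q (b - a),
  so by connectivity V_1 lies on a line through a. This line contains b, hence is mapped into
  itself by every Psi_i, and the attractor K lies on it. By connectivity again, the convex hull
  of K is covered by its images under the Psi_i, so K is a whole segment [m, M] (in the
  coordinate with a = 0 and b = 1). Finally a is essential, so Psi_i(a) = Psi_j(b) for two
  different indices, and the nesting axiom then rules out M - m > 1; thus K = [a, b].
*)

section \<open>Centroids, contractions and reflections\<close>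

definition centroid :: "'a::real_vector set \<Rightarrow> 'a" where
  "centroid A = inverse (real (card A)) *\<^sub>R (\<Sum>a\<in>A. a)"

lemma centroid_fixed_if_permuted:
  assumes "finite A" "A \<noteq> {}" "linear M" "(\<lambda>z. M z + k) ` A = A"
  shows "M (centroid A) + k = centroid A"
proof -
  let ?F = "\<lambda>z. M z + k"
  have "inj_on ?F A" using assms(1,4) by (simp add: eq_card_imp_inj_on)
  then have "(\<Sum>a\<in>A. ?F a) = (\<Sum>a\<in>?F ` A. a)" by (simp add: sum.reindex)
  also have "\<dots> = (\<Sum>a\<in>A. a)" using assms(4) by simp
  finally have sum_eq: "M (\<Sum>a\<in>A. a) + real (card A) *\<^sub>R k = (\<Sum>a\<in>A. a)"
    using assms(3) by (simp add: sum.distrib linear_sum sum_constant_scaleR del: sum_constant)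
  have "real (card A) \<noteq> 0" using assms(1,2) by simp
  then have "M (centroid A) + k = inverse (real (card A)) *\<^sub>R (M (\<Sum>a\<in>A. a) + real (card A) *\<^sub>R k)"
    unfolding centroid_def using assms(3) by (simp add: linear_scale scaleR_add_right)
  then show ?thesis unfolding sum_eq centroid_def .
qed

lemma centroid_notin_if_equidistant:
  fixes V :: "'a::real_inner set"
  assumes "finite V" "card V \<ge> 2" "\<And>v. v \<in> V \<Longrightarrow> dist g v = r"
  shows "centroid V \<notin> V"
proof
  define c where "c = centroid V"
  assume "centroid V \<in> V"
  then have c: "c \<in> V" by (simp add: c_def)
  have norm_r: "norm (v - g) = r" if "v \<in> V" for v
    using assms(3)[OF that] by (simp add: dist_norm norm_minus_commute)
  have n0: "real (card V) \<noteq> 0" using assms(2) by simp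
  have "(\<Sum>v\<in>V. (v - g) \<bullet> (c - g)) = (\<Sum>v\<in>V. v - g) \<bullet> (c - g)"
    by (simp add: inner_sum_left)
  also have "(\<Sum>v\<in>V. v - g) = real (card V) *\<^sub>R (c - g)"
    using n0 by (simp add: c_def centroid_def sum_subtractf scaleR_diff_right sum_constant_scaleR del: sum_constant)
  finally have sum_eq: "(\<Sum>v\<in>V. (v - g) \<bullet> (c - g)) = (\<Sum>v\<in>V. r\<^sup>2)"
    using norm_r[OF c] by (simp add: power2_norm_eq_inner[symmetric])
  have le: "(v - g) \<bullet> (c - g) \<le> r\<^sup>2" if "v \<in> V" for v
    using norm_cauchy_schwarz[of "v - g" "c - g"] norm_r[OF that] norm_r[OF c]
    by (simp add: power2_eq_square)
  have "\<not> V \<subseteq> {c}" using card_mono[of "{c}" V] assms(2) by auto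
  then obtain v where v: "v \<in> V" "v \<noteq> c" by blast
  have "(norm (v - c))\<^sup>2 = (norm (v - g))\<^sup>2 - 2 * ((v - g) \<bullet> (c - g)) + (norm (c - g))\<^sup>2"
    by (simp add: power2_norm_eq_inner inner_diff_left inner_diff_right inner_commute)
  also have "\<dots> = 2 * r\<^sup>2 - 2 * ((v - g) \<bullet> (c - g))" unfolding norm_r[OF v(1)] norm_r[OF c] by simp
  finally have "(norm (v - c))\<^sup>2 = 2 * r\<^sup>2 - 2 * ((v - g) \<bullet> (c - g))" .
  moreover have "0 < (norm (v - c))\<^sup>2" using v(2) by simp
  ultimately have "(v - g) \<bullet> (c - g) < r\<^sup>2" by linarith
  then have "(\<Sum>v\<in>V. (v - g) \<bullet> (c - g)) < (\<Sum>v\<in>V. r\<^sup>2)"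
    using sum_strict_mono_ex1[OF assms(1), of "\<lambda>v. (v - g) \<bullet> (c - g)" "\<lambda>_. r\<^sup>2"] le v(1) by blast
  then show False using sum_eq by simp
qed

lemma sub_self_similar_subset_invariant:
  fixes f :: "'i \<Rightarrow> 'a::heine_borel \<Rightarrow> 'a"
  assumes contr: "\<And>i x y. i \<in> I \<Longrightarrow> dist (f i x) (f i y) \<le> c * dist x y"
    and "0 \<le> c" "c < 1" and X: "compact X" "X \<subseteq> (\<Union>i\<in>I. f i ` X)"
    and F: "closed F" "F \<noteq> {}" "\<And>i. i \<in> I \<Longrightarrow> f i ` F \<subseteq> F"
  shows "X \<subseteq> F"
proof (cases "X = {}")
  case False
  \<comment> \<open>The distance to \<open>F\<close> is maximal on \<open>X\<close> at some \<open>f i x\<close>, where contraction bounds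
    it by \<open>c\<close> times the maximum.\<close>
  define h where "h x = infdist x F" for x
  have "continuous_on X h" unfolding h_def by (intro continuous_intros)
  then obtain xs where xs: "xs \<in> X" "\<And>x. x \<in> X \<Longrightarrow> h x \<le> h xs"
    using continuous_attains_sup[OF X(1) False] by blast
  obtain i x where i: "i \<in> I" "x \<in> X" "xs = f i x" using X(2) xs(1) by blast
  obtain p where p: "p \<in> F" "h x = dist x p"
    using infdist_attains_inf[OF F(1,2)] unfolding h_def by blast
  have "h xs \<le> dist (f i x) (f i p)"
    unfolding h_def i(3) using F(3)[OF i(1)] p(1) by (blast intro: infdist_le)
  also have "\<dots> \<le> c * h x" using contr[OF i(1)] p(2) by simp
  also have "\<dots> \<le> c * h xs"
    using xs(2)[OF i(2)] \<open>0 \<le> c\<close> by (rule mult_left_mono)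
  finally have "(1 - c) * h xs \<le> 0" by (simp add: algebra_simps)
  then have "h xs \<le> 0" using \<open>c < 1\<close> by (simp add: mult_le_0_iff)
  then have "h x = 0" if "x \<in> X" for x
    using xs(2)[OF that] infdist_nonneg[of x F] unfolding h_def by (meson order.antisym order.trans)
  then show ?thesis using in_closed_iff_infdist_zero[OF F(1,2)] unfolding h_def by blast
qed simp

definition reflection_along :: "'a::real_inner \<Rightarrow> 'a \<Rightarrow> 'a" where
  "reflection_along e z = z - (2 * (z \<bullet> e) / (e \<bullet> e)) *\<^sub>R e"

lemma linear_reflection_along: "linear (reflection_along e)"
  unfolding reflection_along_def
  by (rule linearI) (simp_all add: inner_add_left add_divide_distrib algebra_simps)

lemma reflection_along_reflection_along [simp]: "reflection_along e (reflection_along e z) = z"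
  by (cases "e = 0") (simp_all add: reflection_along_def inner_diff_left algebra_simps)

lemma inj_reflection_along: "inj (reflection_along e)"
  by (metis injI reflection_along_reflection_along)

lemma bisector_reflection_affine:
  "\<exists>k. bisector_reflection x y = (\<lambda>z. reflection_along (y - x) z + k)"
proof -
  define m e where "m = (1/2) *\<^sub>R (x + y)" and "e = y - x"
  have "bisector_reflection x y z = z - (2 * ((z - m) \<bullet> e / (e \<bullet> e))) *\<^sub>R e" for z
    unfolding bisector_reflection_def m_def e_def ..
  then have "bisector_reflection x y = (\<lambda>z. reflection_along e z + (2 * (m \<bullet> e) / (e \<bullet> e)) *\<^sub>R e)"
    by (simp add: fun_eq_iff reflection_along_def inner_diff_left diff_divide_distrib
        right_diff_distrib scaleR_diff_left)
  then show ?thesis unfolding e_def by blast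
qed

lemma dist_eq_if_bisector_reflection_fixed:
  assumes "x \<noteq> y" "bisector_reflection x y g = g"
  shows "dist g x = dist g y"
proof -
  have "(g - (1/2) *\<^sub>R (x + y)) \<bullet> (y - x) = 0"
    using assms unfolding bisector_reflection_def by simp
  then have "2 * (g \<bullet> y) - 2 * (g \<bullet> x) = y \<bullet> y - x \<bullet> x"
    by (simp add: inner_diff_left inner_diff_right inner_add_left inner_add_right inner_commute algebra_simps)
  then have "(dist g x)\<^sup>2 = (dist g y)\<^sup>2"
    unfolding dist_norm power2_norm_eq_inner
    by (simp add: inner_diff_left inner_diff_right inner_commute algebra_simps)
  then show ?thesis by (simp add: power2_eq_iff_nonneg)
qed

lemma orthogonal_transformation_reflection_along:
  assumes "orthogonal_transformation Q"
  shows "reflection_along (Q f) (Q w) = Q (reflection_along f w)"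
  using assms unfolding reflection_along_def orthogonal_transformation_def
  by (simp add: linear_diff linear_scale)

lemma collinear_equidistant_eq:
  fixes g x y y' :: "'a::real_inner"
  assumes "dist g y = dist g x" "dist g y' = dist g x" "y \<noteq> x" "y' \<noteq> x"
    and "y' - x = l *\<^sub>R (y - x)"
  shows "y' = y"
proof -
  define p e where "p = x - g" and "e = y - x"
  have sq: "(p + t *\<^sub>R e) \<bullet> (p + t *\<^sub>R e) = p \<bullet> p + t * (2 * (p \<bullet> e) + t * (e \<bullet> e))" for t
    by (simp add: inner_add_left inner_add_right inner_commute algebra_simps)
  have "p + 1 *\<^sub>R e = y - g" "p + l *\<^sub>R e = y' - g"
    using assms(5) by (simp_all add: p_def e_def algebra_simps)
  then have "norm (p + 1 *\<^sub>R e) = norm p" "norm (p + l *\<^sub>R e) = norm p"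
    using assms(1,2) unfolding p_def by (metis dist_commute dist_norm)+
  then have h1: "2 * (p \<bullet> e) + e \<bullet> e = 0" and h2: "l * (2 * (p \<bullet> e) + l * (e \<bullet> e)) = 0"
    using sq[of 1] sq[of l] by (simp_all add: norm_eq_sqrt_inner)
  have "l * (l - 1) * (e \<bullet> e) =
      l * (2 * (p \<bullet> e) + l * (e \<bullet> e)) - l * (2 * (p \<bullet> e) + e \<bullet> e)"
    by (simp add: algebra_simps)
  also have "\<dots> = 0" by (simp only: h1 h2 mult_zero_right diff_self)
  finally have "l * (l - 1) * (e \<bullet> e) = 0" .
  then have "l = 0 \<or> l = 1" using \<open>y \<noteq> x\<close> by (simp add: e_def)
  then show ?thesis using assms(4,5) by auto
qed

section \<open>Finite planar sets with many reflection symmetries\<close>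

definition complex_of_vec2 :: "pt \<Rightarrow> complex" where
  "complex_of_vec2 v = Complex (v$1) (v$2)"

lemma complex_of_vec2_eq_iff: "complex_of_vec2 a = complex_of_vec2 b \<longleftrightarrow> a = b"
  by (auto simp: complex_of_vec2_def complex_eq_iff vec_eq_iff forall_2)

lemma complex_of_vec2_eq_0_iff: "complex_of_vec2 a = 0 \<longleftrightarrow> a = 0"
  using complex_of_vec2_eq_iff[of a 0] by (simp add: complex_of_vec2_def zero_complex.code)

lemma complex_of_vec2_polar:
  "complex_of_vec2 (r *\<^sub>R vector [cos t, sin t]) = rcis r t"
  by (simp add: complex_of_vec2_def complex_eq_iff)

lemma inner_vec2: "(v::pt) \<bullet> w = v$1 * w$1 + v$2 * w$2"
  by (simp add: inner_vec_def sum_2)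

definition reflection_factor :: "pt \<Rightarrow> complex" where
  "reflection_factor f = - (complex_of_vec2 f / cnj (complex_of_vec2 f))"

lemma complex_of_vec2_reflection_along:
  assumes "f \<noteq> 0"
  shows "complex_of_vec2 (reflection_along f z) = reflection_factor f * cnj (complex_of_vec2 z)"
proof -
  define t where "t = 2 * (z \<bullet> f) / (f \<bullet> f)"
  have t: "t * (f$1 * f$1 + f$2 * f$2) = 2 * (z$1 * f$1 + z$2 * f$2)"
    using assms by (simp add: t_def inner_vec2[symmetric])
  have "complex_of_vec2 (z - t *\<^sub>R f) * cnj (complex_of_vec2 f) =
      - (complex_of_vec2 f * cnj (complex_of_vec2 z))"
    using t by (simp add: complex_of_vec2_def complex_eq_iff algebra_simps)
  moreover have "cnj (complex_of_vec2 f) \<noteq> 0" using assms by (simp add: complex_of_vec2_eq_0_iff)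
  ultimately show ?thesis by (simp add: reflection_along_def t_def reflection_factor_def field_simps)
qed

lemma reflection_factor_nonzero: "f \<noteq> 0 \<Longrightarrow> reflection_factor f \<noteq> 0"
  by (simp add: reflection_factor_def complex_of_vec2_eq_0_iff)

lemma parallel_if_reflection_factor_eq:
  assumes "f \<noteq> 0" "reflection_factor f = reflection_factor g"
  shows "\<exists>l. g = l *\<^sub>R f"
proof -
  have "f$1 * f$1 + f$2 * f$2 \<noteq> 0" "cnj (complex_of_vec2 f) \<noteq> 0"
    using assms(1) by (simp_all add: complex_of_vec2_eq_0_iff inner_vec2[symmetric])
  moreover have "cnj (complex_of_vec2 g) \<noteq> 0"
    using assms reflection_factor_nonzero by (auto simp: reflection_factor_def)
  ultimately have "complex_of_vec2 f * cnj (complex_of_vec2 g) = complex_of_vec2 g * cnj (complex_of_vec2 f)"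
    using assms(2) by (simp add: reflection_factor_def field_simps)
  then have "f$1 * g$2 = f$2 * g$1" by (simp add: complex_of_vec2_def complex_eq_iff algebra_simps)
  with \<open>f$1 * f$1 + f$2 * f$2 \<noteq> 0\<close>
  have "g = ((f \<bullet> g) / (f \<bullet> f)) *\<^sub>R f"
    by (simp add: vec_eq_iff forall_2 inner_vec2 field_simps)
  then show ?thesis by blast
qed

lemma finite_mult_closed_eq_roots_unity:
  fixes \<Omega> :: "complex set"
  assumes "finite \<Omega>" "0 \<notin> \<Omega>" "\<And>x y. x \<in> \<Omega> \<Longrightarrow> y \<in> \<Omega> \<Longrightarrow> x * y \<in> \<Omega>"
    and "card \<Omega> = n" "n \<ge> 1"
  shows "\<Omega> = {exp (2 * of_real pi * \<i> * of_nat j / of_nat n) | j. j < n}"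
proof -
  have "\<omega> ^ n = 1" if \<omega>: "\<omega> \<in> \<Omega>" for \<omega>
  proof -
    have inj: "inj_on ((*) \<omega>) \<Omega>" using \<omega> assms(2) by (auto simp: inj_on_def)
    have "(*) \<omega> ` \<Omega> = \<Omega>" using endo_inj_surj[OF assms(1) _ inj] assms(3)[OF \<omega>] by blast
    then have "prod id \<Omega> = (\<Prod>x\<in>\<Omega>. \<omega> * x)" using prod.reindex[OF inj, of id] by simp
    also have "\<dots> = \<omega> ^ n * prod id \<Omega>" using assms(4) by (simp add: prod.distrib)
    finally show ?thesis using assms(1,2) by (simp add: prod_zero_iff)
  qed
  then have "\<Omega> = {z. z ^ n = 1}"
    using assms(4,5) by (intro card_subset_eq finite_roots_unity) (auto simp: card_complex_roots_unity)
  then show ?thesis using complex_roots_unity[OF assms(5)] by simp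
qed

definition mult_stabilizer :: "complex set \<Rightarrow> complex set" where
  "mult_stabilizer Z = {\<omega>. \<omega> \<noteq> 0 \<and> (*) \<omega> ` Z \<subseteq> Z}"

lemma mult_stabilizer_mult:
  "\<omega> \<in> mult_stabilizer Z \<Longrightarrow> \<omega>' \<in> mult_stabilizer Z \<Longrightarrow> \<omega> * \<omega>' \<in> mult_stabilizer Z"
  by (auto simp: mult_stabilizer_def image_subset_iff mult.assoc)

lemma mult_stabilizer_inverse:
  assumes "finite Z" and \<omega>: "\<omega> \<in> mult_stabilizer Z"
  shows "inverse \<omega> \<in> mult_stabilizer Z"
proof -
  have "(*) \<omega> ` Z = Z"
    using \<omega> by (intro endo_inj_surj[OF assms(1)]) (auto simp: mult_stabilizer_def inj_on_def)
  then have "inverse \<omega> * w \<in> Z" if "w \<in> Z" for w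
  proof -
    obtain w' where "w' \<in> Z" "w = \<omega> * w'" using \<open>w \<in> Z\<close> \<open>(*) \<omega> ` Z = Z\<close> by blast
    then show ?thesis using \<omega> unfolding mult_stabilizer_def by (simp add: mult.assoc[symmetric])
  qed
  then show ?thesis using \<omega> unfolding mult_stabilizer_def by auto
qed

lemma finite_mult_stabilizer:
  assumes "finite Z" "z0 \<in> Z" "z0 \<noteq> 0"
  shows "finite (mult_stabilizer Z)"
proof -
  have "mult_stabilizer Z \<subseteq> (\<lambda>w. w / z0) ` Z"
    using assms(2,3) unfolding mult_stabilizer_def by (force simp: image_subset_iff)
  then show ?thesis using assms(1) finite_surj by blast
qed

lemma single_orbit_if_large_mult_stabilizer:
  assumes Z: "finite Z" "0 \<notin> Z" and z0: "z0 \<in> Z"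
    and large: "card Z < 2 * card (mult_stabilizer Z)"
  shows "Z = (\<lambda>\<omega>. \<omega> * z0) ` mult_stabilizer Z"
proof (rule ccontr)
  let ?\<Omega> = "mult_stabilizer Z"
  define orbit where "orbit z = (\<lambda>\<omega>. \<omega> * z) ` ?\<Omega>" for z
  have "finite ?\<Omega>" using finite_mult_stabilizer Z z0 by blast
  have orbit_subset: "orbit z \<subseteq> Z" if "z \<in> Z" for z
    using that unfolding orbit_def mult_stabilizer_def by auto
  have card_orbit: "card (orbit z) = card ?\<Omega>" if "z \<in> Z" for z
    using that Z(2) unfolding orbit_def by (intro card_image) (auto simp: inj_on_def)
  assume "Z \<noteq> (\<lambda>\<omega>. \<omega> * z0) ` ?\<Omega>"
  then obtain z1 where z1: "z1 \<in> Z" "z1 \<notin> orbit z0"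
    using orbit_subset[OF z0] unfolding orbit_def by blast
  have "orbit z0 \<inter> orbit z1 = {}"
  proof (rule ccontr)
    assume "orbit z0 \<inter> orbit z1 \<noteq> {}"
    then obtain x where x: "x \<in> orbit z0" "x \<in> orbit z1" by blast
    from x(1) obtain \<omega>' where \<omega>': "\<omega>' \<in> ?\<Omega>" "x = \<omega>' * z0" unfolding orbit_def by blast
    from x(2) obtain \<omega> where \<omega>: "\<omega> \<in> ?\<Omega>" "x = \<omega> * z1" unfolding orbit_def by blast
    have "z1 = (inverse \<omega> * \<omega>') * z0"
      using \<omega> \<omega>' unfolding mult_stabilizer_def by (auto simp: field_simps)
    then have "z1 \<in> orbit z0"
      using mult_stabilizer_mult[OF mult_stabilizer_inverse[OF Z(1) \<omega>(1)] \<omega>'(1)]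
      unfolding orbit_def by blast
    then show False using z1(2) by blast
  qed
  moreover have "finite (orbit z)" for z using \<open>finite ?\<Omega>\<close> unfolding orbit_def by simp
  ultimately have "card (orbit z0) + card (orbit z1) = card (orbit z0 \<union> orbit z1)"
    by (simp add: card_Un_disjoint)
  also have "\<dots> \<le> card Z"
    using orbit_subset[OF z0] orbit_subset[OF z1(1)] Z(1) by (simp add: card_mono)
  finally show False using card_orbit[OF z0] card_orbit[OF z1(1)] large by linarith
qed

lemma rotation_orbit_if_reflection_invariant:
  fixes Z A :: "complex set"
  assumes Z: "finite Z" "card Z = n" "n \<ge> 3" "0 \<notin> Z"
    and A: "card A \<ge> n - 1" "0 \<notin> A"
    and invariant: "\<And>a w. a \<in> A \<Longrightarrow> w \<in> Z \<Longrightarrow> a * cnj w \<in> Z"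
  shows "\<exists>z0. z0 \<noteq> 0 \<and> Z = {exp (2 * of_real pi * \<i> * of_nat j / of_nat n) * z0 | j. j < n}"
proof -
  define \<Omega> where "\<Omega> = mult_stabilizer Z"
  obtain z0 where z0: "z0 \<in> Z" using Z(2,3) by fastforce
  have "z0 \<noteq> 0" using z0 Z(4) by blast
  have "finite \<Omega>" unfolding \<Omega>_def using finite_mult_stabilizer[OF Z(1) z0 \<open>z0 \<noteq> 0\<close>] .
  obtain a1 where a1: "a1 \<in> A" using A(1) Z(3) by fastforce
  \<comment> \<open>A composition of two reflections is a rotation.\<close>
  have "(\<lambda>a. a * cnj a1) ` A \<subseteq> \<Omega>"
  proof
    fix \<omega> assume "\<omega> \<in> (\<lambda>a. a * cnj a1) ` A"
    then obtain a where a: "a \<in> A" "\<omega> = a * cnj a1" by blast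
    have eq: "\<omega> * w = a * cnj (a1 * cnj w)" for w by (simp add: a(2) mult.assoc)
    have "\<omega> * w \<in> Z" if "w \<in> Z" for w unfolding eq using invariant[OF a(1) invariant[OF a1 that]] .
    then show "\<omega> \<in> \<Omega>" using a A(2) a1 unfolding \<Omega>_def mult_stabilizer_def by auto
  qed
  moreover have "inj_on (\<lambda>a. a * cnj a1) A" using a1 A(2) by (auto simp: inj_on_def)
  ultimately have "card A \<le> card \<Omega>" using card_inj_on_le \<open>finite \<Omega>\<close> by blast
  then have "card Z < 2 * card \<Omega>" using A(1) Z(2,3) by arith
  then have orbit: "Z = (\<lambda>\<omega>. \<omega> * z0) ` \<Omega>"
    unfolding \<Omega>_def by (rule single_orbit_if_large_mult_stabilizer[OF Z(1,4) z0])
  have "inj_on (\<lambda>\<omega>. \<omega> * z0) \<Omega>" using \<open>z0 \<noteq> 0\<close> by (auto simp: inj_on_def)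
  then have "card \<Omega> = n" using card_image Z(2) unfolding orbit by metis
  then have roots: "\<Omega> = {exp (2 * of_real pi * \<i> * of_nat j / of_nat n) | j. j < n}"
    using finite_mult_closed_eq_roots_unity[OF \<open>finite \<Omega>\<close> _ mult_stabilizer_mult[of _ Z, folded \<Omega>_def]] Z(3)
    unfolding \<Omega>_def mult_stabilizer_def by auto
  have "Z = {exp (2 * of_real pi * \<i> * of_nat j / of_nat n) * z0 | j. j < n}"
    unfolding orbit roots by auto
  then show ?thesis using \<open>z0 \<noteq> 0\<close> by blast
qed

lemma regular_polygon_vertices_if_rotation_orbit:
  fixes V :: "pt set"
  assumes "card V = n" "z0 \<noteq> 0"
    and orbit: "(\<lambda>v. complex_of_vec2 (v - c)) ` V =
      {exp (2 * of_real pi * \<i> * of_nat j / of_nat n) * z0 | j. j < n}"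
  shows "regular_polygon_vertices V"
proof -
  define vertex :: "nat \<Rightarrow> pt" where
    "vertex j = cmod z0 *\<^sub>R vector [cos (Arg z0 + 2 * pi * real j / real n),
                                    sin (Arg z0 + 2 * pi * real j / real n)]" for j
  have "complex_of_vec2 (vertex j) = rcis (cmod z0) (Arg z0 + 2 * pi * real j / real n)" for j
    unfolding vertex_def by (rule complex_of_vec2_polar)
  also have "\<dots> j = cis (2 * pi * real j / real n) * rcis (cmod z0) (Arg z0)" for j
    by (simp add: rcis_def cis_mult add.commute)
  also have "\<dots> j = exp (2 * of_real pi * \<i> * of_nat j / of_nat n) * z0" for j
    by (simp add: rcis_cmod_Arg cis_conv_exp mult_ac)
  finally have vertex: "complex_of_vec2 (vertex j) = exp (2 * of_real pi * \<i> * of_nat j / of_nat n) * z0"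
    for j .
  have "V = {c + vertex j | j. j < n}"
  proof safe
    fix v assume "v \<in> V"
    then have "complex_of_vec2 (v - c) \<in> (\<lambda>v. complex_of_vec2 (v - c)) ` V" by blast
    then obtain j where "j < n" "complex_of_vec2 (v - c) = complex_of_vec2 (vertex j)"
      unfolding orbit vertex by blast
    then show "\<exists>j. v = c + vertex j \<and> j < n"
      by (auto simp: complex_of_vec2_eq_iff algebra_simps)
  next
    fix j :: nat assume "j < n"
    then have "complex_of_vec2 (vertex j) \<in> (\<lambda>v. complex_of_vec2 (v - c)) ` V"
      unfolding orbit vertex by blast
    then obtain v where "v \<in> V" "complex_of_vec2 (vertex j) = complex_of_vec2 (v - c)" by blast
    then show "c + vertex j \<in> V" by (simp add: complex_of_vec2_eq_iff)
  qed
  moreover have "cmod z0 > 0" using assms(2) by simp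
  ultimately show ?thesis
    unfolding regular_polygon_vertices_def vertex_def assms(1) by blast
qed

section \<open>Nested fractals\<close>

locale nested_fractal =
  fixes L :: real and N :: nat and U :: "pt \<Rightarrow> pt" and \<nu> :: "nat \<Rightarrow> pt"
    and K :: "pt set"
  assumes L_gt_1: "L > 1"
    and isometry_U: "\<forall>x y. dist (U x) (U y) = dist x y"
    and compact_K: "compact K" and K_nonempty: "K \<noteq> {}"
    and K_self_similar: "K = (\<Union>i\<in>{1..N}. Psi L U \<nu> i ` K)"
    and simple_nested: "simple_nested_fractal L U \<nu> N K"
begin

abbreviation P where "P \<equiv> Psi L U \<nu>"
abbreviation V0 where "V0 \<equiv> essential_fixed_points L U \<nu> N"
abbreviation V1 where "V1 \<equiv> (\<Union>i\<in>{1..N}. P i ` V0)"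

definition cell_edges :: "(pt \<times> pt) set" where
  "cell_edges = {(a, b). a \<in> V1 \<and> b \<in> V1 \<and> (\<exists>i\<in>{1..N}. a \<in> P i ` K \<and> b \<in> P i ` K)}"

lemma simple_nested_fractal_conditions:
  shows card_V0_ge_2: "card V0 \<ge> 2"
    and nesting: "\<forall>i\<in>{1..N}. \<forall>j\<in>{1..N}. i \<noteq> j \<longrightarrow>
      P i ` K \<inter> P j ` K = P i ` V0 \<inter> P j ` V0"
    and symmetry: "\<forall>i\<in>{1..N}. \<forall>x\<in>V0. \<forall>y\<in>V0. x \<noteq> y \<longrightarrow>
      (\<exists>j\<in>{1..N}. bisector_reflection x y ` (P i ` V0) = P j ` V0)"
    and connectivity: "\<forall>p\<in>V1. \<forall>q\<in>V1. (p, q) \<in> cell_edges\<^sup>*"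
proof -
  note conditions = simple_nested[unfolded simple_nested_fractal_def Let_def cell_edges_def[symmetric]]
  from conditions show "card V0 \<ge> 2" by (elim conjE)
  from conditions show "\<forall>i\<in>{1..N}. \<forall>j\<in>{1..N}. i \<noteq> j \<longrightarrow>
      P i ` K \<inter> P j ` K = P i ` V0 \<inter> P j ` V0" by (elim conjE)
  from conditions show "\<forall>i\<in>{1..N}. \<forall>x\<in>V0. \<forall>y\<in>V0. x \<noteq> y \<longrightarrow>
      (\<exists>j\<in>{1..N}. bisector_reflection x y ` (P i ` V0) = P j ` V0)" by (elim conjE)
  from conditions show "\<forall>p\<in>V1. \<forall>q\<in>V1. (p, q) \<in> cell_edges\<^sup>*" by (elim conjE)
qed

definition Q :: "pt \<Rightarrow> pt" where "Q x = U x - U 0"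

lemma orthogonal_Q: "orthogonal_transformation Q"
  unfolding orthogonal_transformation_isometry Q_def using isometry_U by (simp add: dist_norm)

lemma linear_Q: "linear Q"
  using orthogonal_Q orthogonal_transformation_linear by blast

lemma Psi_diff: "P i x - P i y = (1/L) *\<^sub>R Q (x - y)"
  using linear_diff[OF linear_Q]
  by (simp add: Psi_def Q_def scaleR_diff_right[symmetric])

lemma dist_Psi: "dist (P i x) (P i y) = dist x y / L"
  using L_gt_1 orthogonal_transformation_norm[OF orthogonal_Q]
  by (simp add: dist_norm Psi_diff)

lemma inj_Psi: "inj (P i)"
proof (rule injI)
  fix x y assume "P i x = P i y"
  then have "dist x y / L = 0" using dist_Psi[of i x y] by simp
  then show "x = y" using L_gt_1 by simp
qed

lemma Psi_K_subset: "i \<in> {1..N} \<Longrightarrow> P i ` K \<subseteq> K"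
  using K_self_similar[THEN equalityD2] by blast

lemma K_subset_cells: "K \<subseteq> (\<Union>i\<in>{1..N}. P i ` K)"
  using K_self_similar[THEN equalityD1] .

lemma sub_self_similar_subset:
  assumes "compact X" "X \<subseteq> (\<Union>i\<in>{1..N}. P i ` X)" "closed F" "F \<noteq> {}"
    and "\<And>i. i \<in> {1..N} \<Longrightarrow> P i ` F \<subseteq> F"
  shows "X \<subseteq> F"
proof (rule sub_self_similar_subset_invariant[where c = "1 / L"])
  show "dist (P i x) (P i y) \<le> 1 / L * dist x y" for i x y by (simp add: dist_Psi)
  show "0 \<le> 1 / L" "1 / L < 1" using L_gt_1 by simp_all
qed (fact assms)+

lemma fixed_point_in_K:
  assumes "i \<in> {1..N}" "P i x = x"
  shows "x \<in> K"
proof -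
  have "{x} \<subseteq> (\<Union>i\<in>{1..N}. P i ` {x})" using assms by force
  then show ?thesis
    using sub_self_similar_subset[OF compact_sing _ compact_imp_closed[OF compact_K] K_nonempty Psi_K_subset]
    by blast
qed

lemma V0_fixed: "x \<in> V0 \<Longrightarrow> \<exists>i\<in>{1..N}. P i x = x"
  unfolding essential_fixed_points_def fixed_points_def by blast

lemma V0_subset_K: "V0 \<subseteq> K"
  using V0_fixed fixed_point_in_K by blast

lemma V0_subset_V1: "V0 \<subseteq> V1"
  using V0_fixed by (fastforce intro: rev_image_eqI)

lemma Psi_in_V1: "i \<in> {1..N} \<Longrightarrow> x \<in> V0 \<Longrightarrow> P i x \<in> V1"
  by blast

lemma finite_V0: "finite V0"
  using card_V0_ge_2 card.infinite by fastforce

lemma finite_V1: "finite V1"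
  using finite_V0 by simp

lemma V1_in_cell:
  assumes "p \<in> V1" "i \<in> {1..N}" "p \<in> P i ` K"
  shows "p \<in> P i ` V0"
proof -
  obtain k where k: "k \<in> {1..N}" "p \<in> P k ` V0" using assms(1) by blast
  show ?thesis
  proof (cases "k = i")
    case False
    then have "p \<in> P i ` K \<inter> P k ` K" using k(2) V0_subset_K assms(3) by blast
    also have "\<dots> = P i ` V0 \<inter> P k ` V0" using nesting[rule_format, OF assms(2) k(1)] False by simp
    finally show ?thesis by blast
  qed (use k in simp)
qed

lemma cell_edge_in_cell:
  assumes "(p, q) \<in> cell_edges"
  shows "\<exists>i\<in>{1..N}. p \<in> P i ` V0 \<and> q \<in> P i ` V0"
proof -
  have "p \<in> V1" "q \<in> V1" "\<exists>i\<in>{1..N}. p \<in> P i ` K \<and> q \<in> P i ` K"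
    using assms unfolding cell_edges_def by simp_all
  then obtain i where "i \<in> {1..N}" "p \<in> P i ` K" "q \<in> P i ` K" by blast
  then show ?thesis using V1_in_cell[OF \<open>p \<in> V1\<close>] V1_in_cell[OF \<open>q \<in> V1\<close>] by blast
qed

section \<open>Three or more essential fixed points\<close>

lemma bisector_reflection_permutes_V1:
  assumes "x \<in> V0" "y \<in> V0" "x \<noteq> y"
  shows "bisector_reflection x y ` V1 = V1"
proof (rule endo_inj_surj[OF finite_V1])
  show "bisector_reflection x y ` V1 \<subseteq> V1"
  proof
    fix z assume "z \<in> bisector_reflection x y ` V1"
    then obtain i w where i: "i \<in> {1..N}" "w \<in> P i ` V0" "z = bisector_reflection x y w" by blast
    obtain j where "j \<in> {1..N}" "bisector_reflection x y ` P i ` V0 = P j ` V0"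
      using symmetry assms i(1) by blast
    then show "z \<in> V1" using i by blast
  qed
  from bisector_reflection_affine[of x y]
  obtain k where "bisector_reflection x y = (\<lambda>z. reflection_along (y - x) z + k)" ..
  then show "inj_on (bisector_reflection x y) V1"
    by (auto simp: inj_on_def dest: injD[OF inj_reflection_along])
qed

lemma centroid_V1_equidistant:
  assumes "x \<in> V0" "y \<in> V0"
  shows "dist (centroid V1) x = dist (centroid V1) y"
proof (cases "x = y")
  case False
  from bisector_reflection_affine[of x y]
  obtain k where k: "bisector_reflection x y = (\<lambda>z. reflection_along (y - x) z + k)" ..
  have "V1 \<noteq> {}" using assms(1) V0_subset_V1 by blast
  moreover have "(\<lambda>z. reflection_along (y - x) z + k) ` V1 = V1"
    using bisector_reflection_permutes_V1[OF assms False] unfolding k .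
  ultimately have "reflection_along (y - x) (centroid V1) + k = centroid V1"
    using centroid_fixed_if_permuted[OF finite_V1 _ linear_reflection_along] by blast
  then have "bisector_reflection x y (centroid V1) = centroid V1" unfolding k .
  then show ?thesis using dist_eq_if_bisector_reflection_fixed[OF False] by blast
qed simp

lemma bisector_reflection_diff:
  "bisector_reflection x y z - bisector_reflection x y z' = reflection_along (y - x) (z - z')"
proof -
  from bisector_reflection_affine[of x y]
  obtain k where "bisector_reflection x y = (\<lambda>z. reflection_along (y - x) z + k)" ..
  then show ?thesis by (simp add: linear_diff[OF linear_reflection_along])
qed

lemma bisector_reflection_conjugate:
  assumes "Q f = y - x"
    and "bisector_reflection x y (P i w) = P j w'" "bisector_reflection x y (P i x0) = P j x0'"
  shows "w' - x0' = reflection_along f (w - x0)"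
proof -
  have "(1/L) *\<^sub>R Q (w' - x0') = bisector_reflection x y (P i w) - bisector_reflection x y (P i x0)"
    using assms(2,3) by (simp add: Psi_diff)
  also have "\<dots> = reflection_along (Q f) ((1/L) *\<^sub>R Q (w - x0))"
    by (simp add: bisector_reflection_diff Psi_diff assms(1))
  also have "\<dots> = (1/L) *\<^sub>R Q (reflection_along f (w - x0))"
    by (simp add: linear_scale[OF linear_reflection_along]
        orthogonal_transformation_reflection_along[OF orthogonal_Q])
  finally show ?thesis
    using L_gt_1 orthogonal_transformation_inj[OF orthogonal_Q] by (simp add: inj_eq)
qed

lemma V0_reflection_invariant:
  assumes x: "x \<in> V0" and y: "y \<in> V0" and "x \<noteq> y" and f: "Q f = y - x" and v: "v \<in> V0"
  shows "reflection_along f (v - centroid V0) + centroid V0 \<in> V0"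
proof -
  let ?S = "bisector_reflection x y" and ?R = "reflection_along f"
  obtain i where i: "i \<in> {1..N}" using V0_fixed x by blast
  obtain j where j: "j \<in> {1..N}" "?S ` P i ` V0 = P j ` V0"
    using symmetry x y \<open>x \<noteq> y\<close> i by blast
  have image: "\<exists>w'\<in>V0. ?S (P i w) = P j w'" if "w \<in> V0" for w
    using that j(2) by blast
  obtain x' where x': "?S (P i x) = P j x'" using image[OF x] by blast
  \<comment> \<open>\<open>P j\<^sup>-\<^sup>1 \<circ> ?S \<circ> P i\<close> maps \<open>V0\<close> into itself and equals \<open>?R + \<kappa>\<close>.\<close>
  define \<kappa> where "\<kappa> = x' - ?R x"
  have maps_to: "?R w + \<kappa> \<in> V0" if w: "w \<in> V0" for w
  proof -
    obtain w' where "w' \<in> V0" "?S (P i w) = P j w'" using image[OF w] by blast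
    moreover from this(2) have "w' - x' = ?R (w - x)" by (rule bisector_reflection_conjugate[OF f _ x'])
    then have "w' = ?R w + \<kappa>" by (simp add: \<kappa>_def linear_diff[OF linear_reflection_along] algebra_simps)
    ultimately show ?thesis by simp
  qed
  have "(\<lambda>w. ?R w + \<kappa>) ` V0 = V0"
    using maps_to by (intro endo_inj_surj[OF finite_V0])
      (auto simp: inj_on_def dest: injD[OF inj_reflection_along])
  then have "?R (centroid V0) + \<kappa> = centroid V0"
    using centroid_fixed_if_permuted[OF finite_V0 _ linear_reflection_along] v by blast
  then have "?R (v - centroid V0) + centroid V0 = ?R v + \<kappa>"
    by (simp add: linear_diff[OF linear_reflection_along] algebra_simps)
  then show ?thesis using maps_to[OF v] by simp
qed

lemma Q_inv_Q: "Q (inv Q z) = z"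
  by (rule surj_f_inv_f[OF orthogonal_transformation_surj[OF orthogonal_Q]])

lemma inj_on_reflection_factors:
  assumes x0: "x0 \<in> V0"
  shows "inj_on (\<lambda>y. reflection_factor (inv Q (y - x0))) (V0 - {x0})"
proof (rule inj_onI)
  fix y y' assume y: "y \<in> V0 - {x0}" and y': "y' \<in> V0 - {x0}"
    and eq: "reflection_factor (inv Q (y - x0)) = reflection_factor (inv Q (y' - x0))"
  have "inv Q (y - x0) \<noteq> 0" using y Q_inv_Q[of "y - x0"] linear_0[OF linear_Q] by auto
  then obtain l where "inv Q (y' - x0) = l *\<^sub>R inv Q (y - x0)"
    using parallel_if_reflection_factor_eq eq by blast
  then have "y' - x0 = l *\<^sub>R (y - x0)" by (metis Q_inv_Q linear_scale[OF linear_Q])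
  moreover have "dist (centroid V1) z = dist (centroid V1) x0" if "z \<in> V0" for z
    using centroid_V1_equidistant[OF that x0] .
  ultimately show "y = y'" using collinear_equidistant_eq y y' by (metis DiffE singletonI)
qed

lemma regular_polygon_V0:
  assumes "card V0 \<ge> 3"
  shows "regular_polygon_vertices V0"
proof -
  define n c where "n = card V0" and "c = centroid V0"
  obtain x0 where x0: "x0 \<in> V0" using assms by fastforce
  define f where "f y = inv Q (y - x0)" for y
  have f_nonzero: "f y \<noteq> 0" if "y \<noteq> x0" for y
    using Q_inv_Q[of "y - x0"] that linear_0[OF linear_Q] unfolding f_def by auto
  define Z where "Z = (\<lambda>v. complex_of_vec2 (v - c)) ` V0"
  define A where "A = (\<lambda>y. reflection_factor (f y)) ` (V0 - {x0})"
  have "card Z = n"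
    unfolding Z_def n_def by (intro card_image) (auto simp: inj_on_def complex_of_vec2_eq_iff)
  have "c \<notin> V0"
    using centroid_notin_if_equidistant[OF finite_V0 _ centroid_V1_equidistant[OF _ x0]] assms
    unfolding c_def by simp
  then have "0 \<notin> Z" by (auto simp: Z_def complex_of_vec2_eq_0_iff)
  have "card A \<ge> n - 1"
    unfolding A_def n_def f_def using x0 finite_V0 inj_on_reflection_factors[OF x0]
    by (simp add: card_image)
  have "0 \<notin> A" unfolding A_def using reflection_factor_nonzero[OF f_nonzero] by fastforce
  have "a * cnj w \<in> Z" if a: "a \<in> A" and w: "w \<in> Z" for a w
  proof -
    obtain y v where y: "y \<in> V0" "y \<noteq> x0" "a = reflection_factor (f y)"
      and v: "v \<in> V0" "w = complex_of_vec2 (v - c)"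
      using a w unfolding A_def Z_def by blast
    have "a * cnj w = complex_of_vec2 ((reflection_along (f y) (v - c) + c) - c)"
      using complex_of_vec2_reflection_along[OF f_nonzero[OF y(2)]] y(3) v(2) by simp
    moreover have "reflection_along (f y) (v - c) + c \<in> V0"
      using V0_reflection_invariant[OF x0 y(1) y(2)[symmetric] Q_inv_Q v(1)]
      unfolding c_def f_def .
    ultimately show ?thesis unfolding Z_def by blast
  qed
  then obtain z0 where "z0 \<noteq> 0" "Z = {exp (2 * of_real pi * \<i> * of_nat j / of_nat n) * z0 | j. j < n}"
    using rotation_orbit_if_reflection_invariant[OF _ \<open>card Z = n\<close> _ \<open>0 \<notin> Z\<close> \<open>card A \<ge> n - 1\<close> \<open>0 \<notin> A\<close>]
      finite_V0 assms unfolding Z_def n_def by blast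
  then show ?thesis
    using regular_polygon_vertices_if_rotation_orbit[OF n_def[symmetric]] unfolding Z_def by blast
qed

end

section \<open>Two essential fixed points\<close>

lemma rtrancl_crossing:
  fixes \<tau> :: "'a \<Rightarrow> 'b::linorder"
  assumes "(p, q) \<in> E\<^sup>*" "\<tau> p \<le> t" "t < \<tau> q"
  shows "\<exists>(x, y)\<in>E. \<tau> x \<le> t \<and> t < \<tau> y"
proof (rule ccontr)
  assume no_crossing: "\<not> ?thesis"
  have "\<tau> z \<le> t" if "(p, z) \<in> E\<^sup>*" for z
    using that
  proof (induction rule: rtrancl_induct)
    case (step y z)
    show ?case
    proof (rule ccontr)
      assume "\<not> \<tau> z \<le> t"
      then have "\<exists>(x, y)\<in>E. \<tau> x \<le> t \<and> t < \<tau> y"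
        using step by (intro bexI[of _ "(y, z)"]) simp_all
      then show False using no_crossing by blast
    qed
  qed (use assms(2) in simp)
  then have "\<tau> q \<le> t" using assms(1) .
  then show False using assms(3) by simp
qed

lemma closed_segment_affine_real:
  fixes c k s1 s2 :: real
  shows "closed_segment (c + k * s1) (c + k * s2) = (\<lambda>s. c + k * s) ` closed_segment s1 s2"
proof -
  have "closed_segment (k * s1) (k * s2) = (\<lambda>s. k * s) ` closed_segment s1 s2"
    by (rule closed_segment_linear_image) simp
  then show ?thesis by (simp add: closed_segment_translation image_image)
qed

locale nested_fractal_two_points = nested_fractal +
  fixes a b :: pt
  assumes V0_eq: "V0 = {a, b}" and a_ne_b: "a \<noteq> b"
begin

definition u :: pt where "u = b - a"

lemma a_in_V0: "a \<in> V0" and b_in_V0: "b \<in> V0"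
  by (simp_all add: V0_eq)

lemma u_nonzero: "u \<noteq> 0"
  using a_ne_b by (simp add: u_def)

lemma V1_on_line: "p \<in> V1 \<Longrightarrow> \<exists>t. p = a + t *\<^sub>R Q u"
proof -
  assume "p \<in> V1"
  then have "(a, p) \<in> cell_edges\<^sup>*"
    using connectivity[rule_format, OF V0_subset_V1[THEN subsetD, OF a_in_V0]] by blast
  then show ?thesis
  proof (induction rule: rtrancl_induct)
    case base
    show ?case by (rule exI[of _ 0]) simp
  next
    case (step y z)
    then obtain t where t: "y = a + t *\<^sub>R Q u" by blast
    obtain i where "y \<in> P i ` V0" "z \<in> P i ` V0" using cell_edge_in_cell[OF step(2)] by blast
    then have "y \<in> {P i a, P i b}" "z \<in> {P i a, P i b}" by (simp_all add: V0_eq)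
    moreover have "P i b - P i a = (1/L) *\<^sub>R Q u" by (simp add: Psi_diff u_def)
    ultimately have "z - y \<in> {0 *\<^sub>R Q u, (1/L) *\<^sub>R Q u, (- 1/L) *\<^sub>R Q u}"
      by (auto simp: algebra_simps)
    then obtain s where "z - y = s *\<^sub>R Q u" by blast
    then have "z = a + (t + s) *\<^sub>R Q u" using t by (simp add: algebra_simps)
    then show ?case by blast
  qed
qed

lemma Q_u_sign: "Q u = u \<or> Q u = - u"
proof -
  obtain t where "b = a + t *\<^sub>R Q u" using V1_on_line V0_subset_V1 b_in_V0 by blast
  then have u_eq: "u = t *\<^sub>R Q u" unfolding u_def by (simp add: algebra_simps)
  have "norm u = \<bar>t\<bar> * norm u"
    using arg_cong[of _ _ norm, OF u_eq] orthogonal_transformation_norm[OF orthogonal_Q] by simp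
  then have "\<bar>t\<bar> = 1" using u_nonzero by simp
  then have "t = 1 \<or> t = -1" by linarith
  then show ?thesis using u_eq by (metis scaleR_minus1_left scaleR_one minus_minus)
qed

definition \<eta> :: real where "\<eta> = (if Q u = u then 1 else -1)"

lemma Q_u: "Q u = \<eta> *\<^sub>R u"
  using Q_u_sign by (auto simp: \<eta>_def)

definition \<tau> :: "pt \<Rightarrow> real" where "\<tau> z = ((z - a) \<bullet> u) / (u \<bullet> u)"

lemma \<tau>_line [simp]: "\<tau> (a + s *\<^sub>R u) = s"
  using u_nonzero by (simp add: \<tau>_def)

definition \<psi> :: "nat \<Rightarrow> real \<Rightarrow> real" where "\<psi> i = (\<lambda>s. \<tau> (P i a) + \<eta> / L * s)"

lemma Psi_line: "i \<in> {1..N} \<Longrightarrow> P i (a + s *\<^sub>R u) = a + \<psi> i s *\<^sub>R u"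
proof -
  assume "i \<in> {1..N}"
  then have "P i a \<in> V1" using a_in_V0 by (rule Psi_in_V1)
  then obtain t where "P i a = a + t *\<^sub>R Q u" using V1_on_line by blast
  then have "P i a = a + \<tau> (P i a) *\<^sub>R u" by (simp add: Q_u)
  moreover have "P i (a + s *\<^sub>R u) - P i a = (\<eta> * s / L) *\<^sub>R u"
    by (simp add: Psi_diff linear_scale[OF linear_Q] Q_u)
  ultimately show ?thesis by (simp add: \<psi>_def algebra_simps)
qed

lemma K_on_line: "z \<in> K \<Longrightarrow> z = a + \<tau> z *\<^sub>R u"
proof -
  define F where "F = {z. z = a + \<tau> z *\<^sub>R u}"
  have "closed F"
    unfolding F_def \<tau>_def using u_nonzero by (intro closed_Collect_eq continuous_intros) auto
  moreover have "a \<in> F" by (simp add: F_def \<tau>_def)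
  moreover have "P i z \<in> F" if "i \<in> {1..N}" "z \<in> F" for i z
  proof -
    have "z = a + \<tau> z *\<^sub>R u" using that(2) unfolding F_def by simp
    then have "P i z = a + \<psi> i (\<tau> z) *\<^sub>R u" using Psi_line[OF that(1)] by metis
    then show ?thesis unfolding F_def by simp
  qed
  ultimately have "K \<subseteq> F" using sub_self_similar_subset[OF compact_K K_subset_cells] by blast
  then show "z \<in> K \<Longrightarrow> z = a + \<tau> z *\<^sub>R u" unfolding F_def by blast
qed

lemma \<tau>_Psi: "i \<in> {1..N} \<Longrightarrow> z \<in> K \<Longrightarrow> \<tau> (P i z) = \<psi> i (\<tau> z)"
  by (metis K_on_line Psi_line \<tau>_line)

lemma \<tau>_a: "\<tau> a = 0" and \<tau>_b: "\<tau> b = 1"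
  using \<tau>_line[of 0] \<tau>_line[of 1] by (simp_all add: u_def)

definition m :: real where "m = Inf (\<tau> ` K)"
definition M :: real where "M = Sup (\<tau> ` K)"

lemma \<tau>_K_bounds: "m \<in> \<tau> ` K" "M \<in> \<tau> ` K" "\<tau> ` K \<subseteq> {m..M}"
proof -
  have "compact (\<tau> ` K)"
    unfolding \<tau>_def by (intro compact_continuous_image compact_K continuous_intros) (use u_nonzero in auto)
  then have "closed (\<tau> ` K)" "bdd_below (\<tau> ` K)" "bdd_above (\<tau> ` K)"
    by (auto intro: compact_imp_closed bounded_imp_bdd_below bounded_imp_bdd_above compact_imp_bounded)
  moreover have "\<tau> ` K \<noteq> {}" using K_nonempty by blast
  ultimately show "m \<in> \<tau> ` K" "M \<in> \<tau> ` K" "\<tau> ` K \<subseteq> {m..M}"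
    unfolding m_def M_def by (auto intro: closed_contains_Inf closed_contains_Sup simp: cInf_lower cSup_upper)
qed

lemma m_le_0: "m \<le> 0" and M_ge_1: "1 \<le> M"
  using \<tau>_K_bounds(3) V0_subset_K a_in_V0 b_in_V0 \<tau>_a \<tau>_b by force+

lemma \<psi>_image_of_segment:
  assumes "i \<in> {1..N}" "z \<in> K" "z' \<in> K" "t \<in> closed_segment (\<tau> (P i z)) (\<tau> (P i z'))"
  shows "t \<in> \<psi> i ` {m..M}"
proof -
  have "closed_segment (\<tau> z) (\<tau> z') \<subseteq> {m..M}"
    using assms(2,3) \<tau>_K_bounds(3) by (intro closed_segment_subset) auto
  moreover have "closed_segment (\<psi> i (\<tau> z)) (\<psi> i (\<tau> z')) = \<psi> i ` closed_segment (\<tau> z) (\<tau> z')"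
    unfolding \<psi>_def by (rule closed_segment_affine_real)
  ultimately show ?thesis using assms(4) \<tau>_Psi[OF assms(1,2)] \<tau>_Psi[OF assms(1,3)] by auto
qed

lemma covered_if_between_extremum_and_V1:
  assumes "w \<in> \<tau> ` K" "\<And>p. p \<in> V1 \<Longrightarrow> t \<in> closed_segment w (\<tau> p)"
  shows "t \<in> (\<Union>i\<in>{1..N}. \<psi> i ` {m..M})"
proof -
  obtain i z where i: "i \<in> {1..N}" "z \<in> K" "w = \<tau> (P i z)"
    using assms(1) K_subset_cells by blast
  have "t \<in> closed_segment (\<tau> (P i z)) (\<tau> (P i a))"
    using assms(2) Psi_in_V1[OF i(1) a_in_V0] i(3) by blast
  then have "t \<in> \<psi> i ` {m..M}"
    using \<psi>_image_of_segment[OF i(1,2)] V0_subset_K a_in_V0 by blast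
  then show ?thesis using i(1) by blast
qed

lemma interval_sub_self_similar: "{m..M} \<subseteq> (\<Union>i\<in>{1..N}. \<psi> i ` {m..M})"
proof
  fix t assume t: "t \<in> {m..M}"
  consider (crossing) p q where "p \<in> V1" "q \<in> V1" "\<tau> p \<le> t" "t < \<tau> q"
    | (below) "\<forall>p\<in>V1. t < \<tau> p" | (above) "\<forall>p\<in>V1. \<tau> p \<le> t"
    by (meson not_le)
  then show "t \<in> (\<Union>i\<in>{1..N}. \<psi> i ` {m..M})"
  proof cases
    case crossing
    then obtain x y where xy: "(x, y) \<in> cell_edges" "\<tau> x \<le> t" "t < \<tau> y"
      using rtrancl_crossing[where \<tau> = \<tau>, OF connectivity[rule_format, OF crossing(1,2)] crossing(3,4)]
      by blast
    then obtain i where i: "i \<in> {1..N}" "x \<in> P i ` V0" "y \<in> P i ` V0"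
      using cell_edge_in_cell by blast
    obtain zx zy where z: "zx \<in> V0" "zy \<in> V0" "x = P i zx" "y = P i zy"
      using i(2,3) by blast
    have "t \<in> closed_segment (\<tau> (P i zx)) (\<tau> (P i zy))"
      using xy(2,3) z(3,4) by (simp add: closed_segment_eq_real_ivl)
    then have "t \<in> \<psi> i ` {m..M}"
      using \<psi>_image_of_segment[OF i(1)] z(1,2) V0_subset_K by blast
    then show ?thesis using i(1) by blast
  next
    case below
    have "t \<in> closed_segment m (\<tau> p)" if "p \<in> V1" for p
      using t below[rule_format, OF that] by (simp add: closed_segment_eq_real_ivl)
    then show ?thesis by (rule covered_if_between_extremum_and_V1[OF \<tau>_K_bounds(1)])
  next
    case above
    have "t \<in> closed_segment M (\<tau> p)" if "p \<in> V1" for p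
      using t above[rule_format, OF that] by (simp add: closed_segment_eq_real_ivl)
    then show ?thesis by (rule covered_if_between_extremum_and_V1[OF \<tau>_K_bounds(2)])
  qed
qed

lemma K_eq_line_segment: "K = (\<lambda>s. a + s *\<^sub>R u) ` {m..M}"
proof
  show "K \<subseteq> (\<lambda>s. a + s *\<^sub>R u) ` {m..M}"
    using K_on_line \<tau>_K_bounds(3) by blast
  have "(\<lambda>s. a + s *\<^sub>R u) ` {m..M} \<subseteq> (\<Union>i\<in>{1..N}. P i ` (\<lambda>s. a + s *\<^sub>R u) ` {m..M})"
  proof
    fix x assume "x \<in> (\<lambda>s. a + s *\<^sub>R u) ` {m..M}"
    then obtain t where "t \<in> {m..M}" "x = a + t *\<^sub>R u" by blast
    then obtain i s where "i \<in> {1..N}" "s \<in> {m..M}" "x = a + \<psi> i s *\<^sub>R u"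
      using interval_sub_self_similar by blast
    then have "x = P i (a + s *\<^sub>R u)" using Psi_line by simp
    then show "x \<in> (\<Union>i\<in>{1..N}. P i ` (\<lambda>s. a + s *\<^sub>R u) ` {m..M})"
      using \<open>i \<in> {1..N}\<close> \<open>s \<in> {m..M}\<close> by blast
  qed
  then show "(\<lambda>s. a + s *\<^sub>R u) ` {m..M} \<subseteq> K"
    using sub_self_similar_subset[OF _ _ compact_imp_closed[OF compact_K] K_nonempty Psi_K_subset]
    by (simp add: compact_continuous_image continuous_intros)
qed

lemma Psi_a_eq_Psi_b: "\<exists>i\<in>{1..N}. \<exists>j\<in>{1..N}. i \<noteq> j \<and> P i a = P j b"
proof -
  obtain y i j where y: "y \<in> fixed_points L U \<nu> N" "y \<noteq> a"
    and ij: "i \<in> {1..N}" "j \<in> {1..N}" "i \<noteq> j" "P i a = P j y"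
    using a_in_V0 unfolding essential_fixed_points_def by blast
  have "y \<in> K" using y(1) fixed_point_in_K unfolding fixed_points_def by blast
  then have "P j y \<in> P j ` K" by blast
  moreover have "P j y \<in> P i ` K" using V0_subset_K a_in_V0 ij(4)[symmetric] by blast
  ultimately have "P j y \<in> P i ` K \<inter> P j ` K" by blast
  also have "\<dots> = P i ` V0 \<inter> P j ` V0" using nesting[rule_format, OF ij(1,2,3)] .
  finally obtain y' where "y' \<in> V0" "P j y = P j y'" by blast
  then have "y = b" using y(2) injD[OF inj_Psi] by (fastforce simp: V0_eq)
  then show ?thesis using ij by blast
qed

lemma M_minus_m_le_1: "M - m \<le> 1"
proof (rule ccontr)
  \<comment> \<open>Otherwise the cells \<open>P i ` K\<close> and \<open>P j ` K\<close>, glued at \<open>P i a = P j b\<close>, overlap in a segment.\<close>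
  assume "\<not> M - m \<le> 1"
  then have "m < M - 1" by simp
  obtain i j where ij: "i \<in> {1..N}" "j \<in> {1..N}" "i \<noteq> j" "P i a = P j b"
    using Psi_a_eq_Psi_b by blast
  have "\<tau> (P i a) = \<psi> j 1"
    using ij(4) \<tau>_Psi[OF ij(2)] V0_subset_K b_in_V0 \<tau>_b by auto
  then have shift: "\<psi> i s = \<psi> j (s + 1)" for s by (simp add: \<psi>_def algebra_simps add_divide_distrib)
  define F where "F s = P i (a + s *\<^sub>R u)" for s
  have "F ` {m..M-1} \<subseteq> P i ` V0"
  proof
    fix x assume "x \<in> F ` {m..M-1}"
    then obtain s where s: "s \<in> {m..M-1}" "x = F s" by blast
    have "x = P j (a + (s + 1) *\<^sub>R u)" unfolding s(2) F_def Psi_line[OF ij(1)] Psi_line[OF ij(2)] shift ..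
    moreover have "a + s *\<^sub>R u \<in> K" "a + (s + 1) *\<^sub>R u \<in> K"
      using s(1) m_le_0 by (subst K_eq_line_segment; auto)+
    ultimately have "x \<in> P i ` K \<inter> P j ` K" using s(2) unfolding F_def by blast
    then show "x \<in> P i ` V0" using nesting[rule_format, OF ij(1,2,3)] by blast
  qed
  moreover have "inj_on F {m..M-1}"
    using u_nonzero by (auto simp: inj_on_def F_def dest: injD[OF inj_Psi])
  ultimately have "finite {m..M-1}"
    using finite_V0 by (metis finite_imageD finite_imageI finite_subset)
  then show False using infinite_Icc[OF \<open>m < M - 1\<close>] by blast
qed

lemma K_eq_closed_segment: "K = closed_segment a b"
proof -
  have "m = 0" "M = 1" using m_le_0 M_ge_1 M_minus_m_le_1 by linarith+
  then have "K = (\<lambda>s. a + s *\<^sub>R (b - a)) ` {0..1}" using K_eq_line_segment by (simp add: u_def)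
  also have "\<dots> = closed_segment a b"
    unfolding closed_segment_image_interval by (simp add: algebra_simps)
  finally show ?thesis .
qed

end

theorem proposition2p6:
  fixes L :: real and N :: nat and U :: "pt \<Rightarrow> pt" and \<nu> :: "nat \<Rightarrow> pt" and K :: "pt set"
  assumes "L > 1" and "N \<ge> 2"
    and "\<forall>x y. dist (U x) (U y) = dist x y"
    and "\<nu> 1 = 0"
    and "compact K" and "K \<noteq> {}" and "K = (\<Union>i\<in>{1..N}. Psi L U \<nu> i ` K)"
    and "simple_nested_fractal L U \<nu> N K"
  shows "(card (essential_fixed_points L U \<nu> N) \<ge> 3 \<longrightarrow>
            regular_polygon_vertices (essential_fixed_points L U \<nu> N))
       \<and> (card (essential_fixed_points L U \<nu> N) = 2 \<longrightarrow>
            (\<exists>a b. essential_fixed_points L U \<nu> N = {a, b} \<and> K = closed_segment a b))"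
proof -
  interpret nested_fractal L N U \<nu> K
    using assms(1,3,5-8) by unfold_locales
  show ?thesis
  proof (intro conjI impI)
    assume "card V0 \<ge> 3"
    then show "regular_polygon_vertices V0" by (rule regular_polygon_V0)
  next
    assume "card V0 = 2"
    then obtain a b where ab: "V0 = {a, b}" "a \<noteq> b" by (auto simp: card_2_iff)
    interpret nested_fractal_two_points L N U \<nu> K a b
      using ab by unfold_locales
    show "\<exists>a b. V0 = {a, b} \<and> K = closed_segment a b"
      using ab(1) K_eq_closed_segment by blast
  qed
qed

end
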